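(* Let $\mathcal A\subset\mathbb{R}^d$ be finite, $\lambda\in\mathbb{R}^{\mathcal A}$ and $w\in\mathbb{R}^{\mathcal A}_>$. Then the family $\lambda(t).X_{\mathcal A,w}$ has a limit as $t\to\infty$ in the Hausdorff topology on closed subsets of $\Delta^{\mathcal A}$, and $\lim_{t\to\infty}\lambda(t).X_{\mathcal A,w}=X(\mathcal S_\lambda,w)$, where $\mathcal S_\lambda$ is the regular subdivision of $\mathcal A$ induced by $\lambda$.
   Context: $\Delta^{\mathcal A}=\{z\in\mathbb{R}_{\ge0}^{\mathcal A}\mid\sum_{\mathbf a}z_{\mathbf a}=1\}$ with homogeneous coordinates and the $\ell_1$ metric $d(y,z)=\sum_{\mathbf a}|y_{\mathbf a}-z_{\mathbf a}|$; the Hausdorff distance between closed sets $X,Y$ is $\max\{\sup_{x\in X}\inf_{y\in Y}d(x,y),\sup_{y\in Y}\inf_{x\in X}d(x,y)\}$. For $\mathcal F\subset\mathcal A$, $\Delta^{\mathcal F}\subset\Delta^{\mathcal A}$ is the face with $z_{\mathbf a}=0$ for $\mathbf a\notin\mathcal F$. For $x\in\mathbb{R}^d_>$, $x^{\mathbf a}=\prod_j\exp(\mathbf a_j\log x_j)$. For $w\in\mathbb{R}^{\mathcal A}_>$, $X_{\mathcal F,w}$ is the closure in $\Delta^{\mathcal F}$ of $\{[w_{\mathbf f}x^{\mathbf f}\mid\mathbf f\in\mathcal F]\mid x\in\mathbb{R}^d_>\}$ (a real irrational toric variety, translated by $w$); $X_{\mathcal A,w}$ is the case $\mathcal F=\mathcal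 A$. The torus acts by $u.z=[u_{\mathbf a}z_{\mathbf a}]$. For $\lambda\in\mathbb{R}^{\mathcal A}$, $\lambda(t)\in\mathbb{R}^{\mathcal A}_>$ has coordinates $\lambda(t)_{\mathbf a}=\exp(t\lambda(\mathbf a))$. Regular subdivision: let $P_\lambda=\mathrm{conv}\{(\mathbf a,\lambda(\mathbf a))\}\subset\mathbb{R}^{d+1}$; upper faces are faces with an outward normal having positive last coordinate; $\mathcal S_\lambda$ is the collection of sets $\{\mathbf a\in\mathcal A\mid(\mathbf a,\lambda(\mathbf a))\in F\}$ for $F$ an upper face (the faces of $\mathcal S_\lambda$). For a subdivision $\mathcal S$, $X(\mathcal S,w):=\bigcup_{\mathcal F\text{ a face of }\mathcal S}X_{\mathcal F,w}$. *)

theory Defs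
  imports "HOL-Analysis.Analysis"
begin

text \<open>Points of \<open>\<Delta>^A\<close> are functions \<open>'a \<Rightarrow> real\<close> vanishing outside \<open>A\<close>
  (homogeneous coordinates are normalised to sum 1).\<close>

definition simplex_face :: "'a set \<Rightarrow> 'a set \<Rightarrow> ('a \<Rightarrow> real) set" where
  "simplex_face A F = {z. (\<forall>a. a \<notin> A \<longrightarrow> z a = 0) \<and> (\<forall>a\<in>A. 0 \<le> z a)
      \<and> (\<Sum>a\<in>A. z a) = 1 \<and> (\<forall>a\<in>A. a \<notin> F \<longrightarrow> z a = 0)}"

abbreviation std_simplex :: "'a set \<Rightarrow> ('a \<Rightarrow> real) set" where
  "std_simplex A \<equiv> simplex_face A A"

definition l1dist :: "'a set \<Rightarrow> ('a \<Rightarrow> real) \<Rightarrow> ('a \<Rightarrow> real) \<Rightarrow> real" where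
  "l1dist A y z = (\<Sum>a\<in>A. \<bar>y a - z a\<bar>)"

definition hausdorff_l1 :: "'a set \<Rightarrow> ('a \<Rightarrow> real) set \<Rightarrow> ('a \<Rightarrow> real) set \<Rightarrow> real" where
  "hausdorff_l1 A X Y = max (SUP x\<in>X. INF y\<in>Y. l1dist A x y) (SUP y\<in>Y. INF x\<in>X. l1dist A x y)"

definition closure_in_face :: "'a set \<Rightarrow> 'a set \<Rightarrow> ('a \<Rightarrow> real) set \<Rightarrow> ('a \<Rightarrow> real) set" where
  "closure_in_face A F S = {z \<in> simplex_face A F. \<forall>e>0. \<exists>y\<in>S. l1dist A z y < e}"

definition monomial_pos :: "real^'d \<Rightarrow> real^'d \<Rightarrow> real" where
  "monomial_pos x a = (\<Prod>j\<in>UNIV. exp (a $ j * ln (x $ j)))"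

definition pos_orthant :: "(real^'d) set" where
  "pos_orthant = {x. \<forall>j. 0 < x $ j}"

definition toric_point :: "(real^'d) set \<Rightarrow> (real^'d \<Rightarrow> real) \<Rightarrow> real^'d \<Rightarrow> (real^'d \<Rightarrow> real)" where
  "toric_point F w x = (\<lambda>a. if a \<in> F then w a * monomial_pos x a / (\<Sum>b\<in>F. w b * monomial_pos x b) else 0)"

definition toric_var :: "(real^'d) set \<Rightarrow> (real^'d) set \<Rightarrow> (real^'d \<Rightarrow> real) \<Rightarrow> (real^'d \<Rightarrow> real) set" where
  "toric_var A F w = closure_in_face A F (toric_point F w ` pos_orthant)"

definition torus_act :: "'a set \<Rightarrow> ('a \<Rightarrow> real) \<Rightarrow> ('a \<Rightarrow> real) \<Rightarrow> ('a \<Rightarrow> real)" where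
  "torus_act A u z = (\<lambda>a. if a \<in> A then u a * z a / (\<Sum>b\<in>A. u b * z b) else 0)"

definition one_param :: "('a \<Rightarrow> real) \<Rightarrow> real \<Rightarrow> ('a \<Rightarrow> real)" where
  "one_param lam t = (\<lambda>a. exp (t * lam a))"

definition lifted_polytope :: "(real^'d) set \<Rightarrow> (real^'d \<Rightarrow> real) \<Rightarrow> ((real^'d) \<times> real) set" where
  "lifted_polytope A lam = convex hull ((\<lambda>a. (a, lam a)) ` A)"

definition upper_face :: "((real^'d) \<times> real) set \<Rightarrow> ((real^'d) \<times> real) set \<Rightarrow> bool" where
  "upper_face P F \<longleftrightarrow> F face_of P \<and>
     (\<exists>c::(real^'d) \<times> real. snd c > 0 \<and> F = {p \<in> P. \<forall>q\<in>P. c \<bullet> q \<le> c \<bullet> p})"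

definition reg_subdiv :: "(real^'d) set \<Rightarrow> (real^'d \<Rightarrow> real) \<Rightarrow> (real^'d) set set" where
  "reg_subdiv A lam = {{a \<in> A. (a, lam a) \<in> F} | F. upper_face (lifted_polytope A lam) F}"

definition subdiv_var :: "(real^'d) set \<Rightarrow> (real^'d) set set \<Rightarrow> (real^'d \<Rightarrow> real) \<Rightarrow> (real^'d \<Rightarrow> real) set" where
  "subdiv_var A S w = (\<Union>F\<in>S. toric_var A F w)"

end

theory Submission
  imports Defs
begin

text \<open>A point of \<open>X\<^bsub>\<A>,w\<^esub>\<close> is the normalisation of \<open>w\<^sub>a exp \<langle>a, u\<rangle>\<close>, and \<open>\<lambda>(t)\<close> maps it to
  the normalisation of \<open>w\<^sub>a exp (t (\<lambda>(a) + \<langle>a, v\<rangle>))\<close> with \<open>v = u / t\<close>. The mass of this point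
  concentrates, at rate \<open>exp (- t \<delta>)\<close>, on those \<open>a\<close> that come within \<open>\<delta>\<close> of maximising
  \<open>\<lambda> + \<langle>\<cdot>, v\<rangle>\<close>. The key fact is that \<open>\<delta> > 0\<close> can be chosen independently of \<open>v\<close> so that
  these near-maximisers always lie in one face of \<open>\<S>\<^sub>\<lambda>\<close>: a subset of \<open>\<A>\<close> lying in no face
  has its lifted barycentre strictly below the upper boundary of the lifted polytope, which
  yields a uniform gap, and there are only finitely many such subsets. Conversely, the point
  with parameter \<open>u\<close> of \<open>X\<^bsub>F,w\<^esub>\<close>, \<open>F\<close> the face maximising \<open>\<lambda> + \<langle>\<cdot>, c\<rangle>\<close>, is the limit of the
  orbit of the point with parameter \<open>u + t c\<close>. Total boundedness of the simplex makes both
  approximations uniform.\<close>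

section \<open>Normalised points of the simplex\<close>

definition normalize_on :: "'a set \<Rightarrow> ('a \<Rightarrow> real) \<Rightarrow> ('a \<Rightarrow> real)" where
  "normalize_on S p = (\<lambda>a. if a \<in> S then p a / sum p S else 0)"

lemma normalize_on_cong: "(\<And>a. a \<in> S \<Longrightarrow> p a = q a) \<Longrightarrow> normalize_on S p = normalize_on S q"
  unfolding normalize_on_def by (auto intro!: ext sum.cong)

lemma normalize_on_scale: "C \<noteq> 0 \<Longrightarrow> normalize_on S (\<lambda>a. C * p a) = normalize_on S p"
  unfolding normalize_on_def by (auto intro!: ext simp: sum_distrib_left[symmetric])

lemma normalize_on_in_simplex_face:
  assumes "finite A" "F \<subseteq> A" "F \<noteq> {}" "\<forall>a\<in>F. 0 < p a"
  shows "normalize_on F p \<in> simplex_face A F"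
proof -
  have pos: "sum p F > 0"
    using assms finite_subset by (intro sum_pos) auto
  have "(\<Sum>a\<in>A. normalize_on F p a) = (\<Sum>a\<in>F. p a / sum p F)"
    using assms by (intro sum.mono_neutral_cong_right) (auto simp: normalize_on_def)
  also have "\<dots> = 1"
    using pos by (simp add: sum_divide_distrib[symmetric])
  finally show ?thesis
    using assms pos unfolding simplex_face_def normalize_on_def by (auto intro: less_imp_le)
qed

lemma torus_act_normalize_on:
  assumes "sum p A \<noteq> 0"
  shows "torus_act A u (normalize_on A p) = normalize_on A (\<lambda>a. u a * p a)"
proof -
  have "(\<Sum>b\<in>A. u b * normalize_on A p b) = (\<Sum>b\<in>A. u b * p b) / sum p A"
    by (simp add: normalize_on_def sum_divide_distrib)
  then show ?thesis
    using assms unfolding torus_act_def normalize_on_def by (auto intro!: ext)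
qed

lemma l1dist_normalize_on_subset:
  assumes "finite A" "F \<subseteq> A" "F \<noteq> {}" "\<forall>a\<in>A. 0 < p a"
  shows "l1dist A (normalize_on A p) (normalize_on F p) = 2 * sum p (A - F) / sum p A"
proof -
  define SA SF SD where "SA = sum p A" and "SF = sum p F" and "SD = sum p (A - F)"
  have SFpos: "SF > 0"
    unfolding SF_def using assms finite_subset by (intro sum_pos) auto
  have SAeq: "SA = SF + SD"
    unfolding SA_def SF_def SD_def using sum.subset_diff[OF assms(2,1)] by (simp add: add.commute)
  have SDnn: "SD \<ge> 0"
    unfolding SD_def using assms by (intro sum_nonneg) (auto intro: less_imp_le)
  have SApos: "SA > 0"
    using SAeq SFpos SDnn by simp
  have off: "(\<Sum>a\<in>A - F. \<bar>normalize_on A p a - normalize_on F p a\<bar>) = SD / SA"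
    unfolding SD_def SA_def sum_divide_distrib using assms SApos
    by (intro sum.cong) (auto simp: normalize_on_def SA_def)
  have "(\<Sum>a\<in>F. \<bar>normalize_on A p a - normalize_on F p a\<bar>) = (\<Sum>a\<in>F. p a * (1 / SF - 1 / SA))"
  proof (intro sum.cong refl)
    fix a assume a: "a \<in> F"
    have "0 < p a"
      using a assms by blast
    then have "p a / SA \<le> p a / SF"
      using SFpos SAeq SDnn by (intro divide_left_mono) auto
    then show "\<bar>normalize_on A p a - normalize_on F p a\<bar> = p a * (1 / SF - 1 / SA)"
      using a assms by (auto simp: normalize_on_def SA_def[symmetric] SF_def[symmetric] algebra_simps)
  qed
  also have "\<dots> = SF * (1 / SF - 1 / SA)"
    unfolding SF_def by (simp add: sum_distrib_right)
  also have "\<dots> = (SA - SF) / SA"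
    using SFpos SApos by (simp add: field_simps)
  also have "\<dots> = SD / SA"
    using SAeq by simp
  finally have on: "(\<Sum>a\<in>F. \<bar>normalize_on A p a - normalize_on F p a\<bar>) = SD / SA" .
  have "l1dist A (normalize_on A p) (normalize_on F p) = SD / SA + SD / SA"
    unfolding l1dist_def sum.subset_diff[OF assms(2,1)] off on ..
  then show ?thesis
    by (simp add: SA_def SD_def)
qed

lemma toric_point_image_eq:
  "toric_point F w ` pos_orthant = range (\<lambda>u. normalize_on F (\<lambda>a. w a * exp (a \<bullet> u)))"
proof -
  have monomial: "monomial_pos x a = exp (a \<bullet> (\<chi> j. ln (x $ j)))" for x a :: "real^'d"
    unfolding monomial_pos_def inner_vec_def by (simp add: exp_sum)
  have point: "toric_point F w x = normalize_on F (\<lambda>a. w a * exp (a \<bullet> (\<chi> j. ln (x $ j))))" for x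
    unfolding toric_point_def normalize_on_def monomial by simp
  have orthant: "pos_orthant = (\<lambda>u. \<chi> j. exp (u $ j)) ` UNIV"
  proof (intro set_eqI iffI)
    fix x :: "real^'d" assume "x \<in> pos_orthant"
    then have "x = (\<chi> j. exp ((\<chi> j. ln (x $ j)) $ j))"
      unfolding pos_orthant_def by (simp add: vec_eq_iff)
    then show "x \<in> range (\<lambda>u. \<chi> j. exp (u $ j))"
      by blast
  qed (auto simp: pos_orthant_def)
  show ?thesis
    unfolding orthant image_image point vec_lambda_beta ln_exp vec_lambda_eta ..
qed

lemma toric_var_subset_simplex_face: "toric_var A F w \<subseteq> simplex_face A F"
  unfolding toric_var_def closure_in_face_def by auto

lemma normalize_on_in_toric_var:
  assumes "finite A" "F \<subseteq> A" "F \<noteq> {}" "\<forall>a\<in>F. 0 < w a"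
  shows "normalize_on F (\<lambda>a. w a * exp (a \<bullet> u)) \<in> toric_var A F w"
proof -
  let ?z = "normalize_on F (\<lambda>a. w a * exp (a \<bullet> u))"
  have "?z \<in> toric_point F w ` pos_orthant"
    unfolding toric_point_image_eq by blast
  moreover have "?z \<in> simplex_face A F"
    using assms by (intro normalize_on_in_simplex_face) auto
  moreover have "l1dist A ?z ?z = 0"
    by (simp add: l1dist_def)
  ultimately show ?thesis
    unfolding toric_var_def closure_in_face_def by force
qed

lemma l1dist_nonneg: "0 \<le> l1dist A x y"
  unfolding l1dist_def by (simp add: sum_nonneg)

lemma l1dist_commute: "l1dist A x y = l1dist A y x"
  unfolding l1dist_def by (simp add: abs_minus_commute)

lemma l1dist_triangle: "l1dist A x z \<le> l1dist A x y + l1dist A y z"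
proof -
  have "(\<Sum>a\<in>A. \<bar>x a - z a\<bar>) \<le> (\<Sum>a\<in>A. \<bar>x a - y a\<bar> + \<bar>y a - z a\<bar>)"
    by (intro sum_mono) linarith
  then show ?thesis
    unfolding l1dist_def by (simp add: sum.distrib)
qed

lemma simplex_face_coord_bounds:
  assumes "finite A" "z \<in> simplex_face A F" "a \<in> A"
  shows "0 \<le> z a" "z a \<le> 1"
proof -
  have nonneg: "\<forall>a\<in>A. 0 \<le> z a" and sum1: "(\<Sum>a\<in>A. z a) = 1"
    using assms(2) unfolding simplex_face_def by auto
  show "0 \<le> z a"
    using nonneg assms(3) by blast
  have "z a \<le> (\<Sum>a\<in>A. z a)"
    by (rule member_le_sum) (use nonneg assms in auto)
  then show "z a \<le> 1"
    by (simp add: sum1)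
qed

lemma weighted_sum_simplex_face_ge:
  assumes "z \<in> simplex_face A F" "\<forall>a\<in>A. m \<le> u a"
  shows "m \<le> (\<Sum>a\<in>A. u a * z a)"
proof -
  have "(\<Sum>a\<in>A. z a) = 1" "\<forall>a\<in>A. 0 \<le> z a"
    using assms(1) unfolding simplex_face_def by auto
  then have "m = (\<Sum>a\<in>A. m * z a)"
    by (simp add: sum_distrib_left[symmetric])
  also have "\<dots> \<le> (\<Sum>a\<in>A. u a * z a)"
    using assms(2) \<open>\<forall>a\<in>A. 0 \<le> z a\<close> by (intro sum_mono mult_right_mono) auto
  finally show ?thesis .
qed

lemma l1dist_torus_act_le_weighted:
  fixes u z s :: "'a \<Rightarrow> real" and A :: "'a set"
  defines "Nz \<equiv> \<Sum>a\<in>A. u a * z a" and "Ns \<equiv> \<Sum>a\<in>A. u a * s a"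
    and "D \<equiv> \<Sum>a\<in>A. u a * \<bar>z a - s a\<bar>"
  assumes "0 < Nz" "0 < Ns" "\<forall>a\<in>A. 0 \<le> u a" "\<forall>a\<in>A. 0 \<le> s a"
  shows "l1dist A (torus_act A u z) (torus_act A u s) \<le> 2 * D / Nz"
proof -
  have "l1dist A (torus_act A u z) (torus_act A u s) = (\<Sum>a\<in>A. \<bar>u a * z a / Nz - u a * s a / Ns\<bar>)"
    unfolding l1dist_def torus_act_def Nz_def Ns_def by (intro sum.cong) auto
  also have "\<dots> \<le> (\<Sum>a\<in>A. u a * \<bar>z a - s a\<bar> / Nz + u a * s a * \<bar>1 / Nz - 1 / Ns\<bar>)"
  proof (intro sum_mono)
    fix a assume a: "a \<in> A"
    have "u a * z a / Nz - u a * s a / Ns = u a * (z a - s a) / Nz + u a * s a * (1 / Nz - 1 / Ns)"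
      by (simp add: right_diff_distrib diff_divide_distrib)
    also have "\<bar>\<dots>\<bar> \<le> \<bar>u a * (z a - s a) / Nz\<bar> + \<bar>u a * s a * (1 / Nz - 1 / Ns)\<bar>"
      by (rule abs_triangle_ineq)
    also have "\<dots> = u a * \<bar>z a - s a\<bar> / Nz + u a * s a * \<bar>1 / Nz - 1 / Ns\<bar>"
    proof -
      have "0 \<le> u a" "0 \<le> s a"
        using assms(6,7) a by auto
      then show ?thesis
        using assms(4) by (simp add: abs_mult abs_divide)
    qed
    finally show "\<bar>u a * z a / Nz - u a * s a / Ns\<bar> \<le> u a * \<bar>z a - s a\<bar> / Nz + u a * s a * \<bar>1 / Nz - 1 / Ns\<bar>" .
  qed
  also have "\<dots> = D / Nz + Ns * \<bar>1 / Nz - 1 / Ns\<bar>"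
    unfolding D_def Ns_def by (simp add: sum.distrib sum_divide_distrib sum_distrib_right)
  also have "Ns * \<bar>1 / Nz - 1 / Ns\<bar> = \<bar>Ns - Nz\<bar> / Nz"
  proof -
    have "1 / Nz - 1 / Ns = (Ns - Nz) / (Nz * Ns)"
      using assms(4,5) by (simp add: field_simps)
    then show ?thesis
      using assms(4,5) by (simp add: abs_divide abs_mult)
  qed
  finally have split: "l1dist A (torus_act A u z) (torus_act A u s) \<le> D / Nz + \<bar>Ns - Nz\<bar> / Nz" .
  have "Nz - Ns = (\<Sum>a\<in>A. u a * (z a - s a))"
    unfolding Ns_def Nz_def by (simp add: sum_subtractf[symmetric] right_diff_distrib)
  then have "\<bar>Ns - Nz\<bar> = \<bar>\<Sum>a\<in>A. u a * (z a - s a)\<bar>"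
    by (simp add: abs_minus_commute)
  also have "\<dots> \<le> (\<Sum>a\<in>A. \<bar>u a * (z a - s a)\<bar>)"
    by (rule sum_abs)
  also have "\<dots> = D"
    unfolding D_def using assms(6) by (intro sum.cong) (auto simp: abs_mult)
  finally have "\<bar>Ns - Nz\<bar> / Nz \<le> D / Nz"
    using assms(4) by (intro divide_right_mono) auto
  then show ?thesis
    using split by linarith
qed

lemma l1dist_torus_act_le:
  assumes "finite A" "m > 0" "\<forall>a\<in>A. m \<le> u a \<and> u a \<le> M"
    and "z \<in> simplex_face A A" "s \<in> simplex_face A A"
  shows "l1dist A (torus_act A u z) (torus_act A u s) \<le> 2 * M / m * l1dist A z s"
proof -
  define D where "D = (\<Sum>a\<in>A. u a * \<bar>z a - s a\<bar>)"
  have u_nonneg: "\<forall>a\<in>A. 0 \<le> u a"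
    using assms(2,3) by (meson less_le_trans less_imp_le)
  have Nz: "m \<le> (\<Sum>a\<in>A. u a * z a)" "m \<le> (\<Sum>a\<in>A. u a * s a)"
    using assms(3-5) by (blast intro: weighted_sum_simplex_face_ge)+
  have "\<forall>a\<in>A. 0 \<le> s a"
    using assms(5) unfolding simplex_face_def by auto
  then have "l1dist A (torus_act A u z) (torus_act A u s) \<le> 2 * D / (\<Sum>a\<in>A. u a * z a)"
    unfolding D_def using Nz assms(2) u_nonneg by (intro l1dist_torus_act_le_weighted) auto
  also have "\<dots> \<le> 2 * D / m"
  proof (rule divide_left_mono)
    show "0 \<le> 2 * D"
      unfolding D_def using u_nonneg by (intro mult_nonneg_nonneg sum_nonneg) auto
  qed (use Nz assms(2) in auto)
  also have "\<dots> \<le> 2 * (M * l1dist A z s) / m"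
  proof -
    have "D \<le> M * l1dist A z s"
      unfolding D_def l1dist_def sum_distrib_left using assms(3) by (intro sum_mono mult_right_mono) auto
    then show ?thesis
      using assms(2) by (intro divide_right_mono) auto
  qed
  finally show ?thesis
    by simp
qed

lemma l1dist_le_of_floor_eq:
  fixes s k :: "'a \<Rightarrow> real"
  assumes "0 < r" "\<forall>a\<in>A. \<lfloor>s a * r\<rfloor> = \<lfloor>k a * r\<rfloor>"
  shows "l1dist A s k \<le> real (card A) / r"
proof -
  have "\<bar>s a - k a\<bar> \<le> 1 / r" if "a \<in> A" for a
  proof -
    have "\<lfloor>s a * r\<rfloor> = \<lfloor>k a * r\<rfloor>"
      using assms(2) that by blast
    then have "\<bar>s a * r - k a * r\<bar> < 1"
      by linarith
    then have "\<bar>s a - k a\<bar> * r < 1"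
      using assms(1) by (simp add: left_diff_distrib[symmetric] abs_mult)
    then show ?thesis
      using assms(1) by (simp add: field_simps)
  qed
  then have "l1dist A s k \<le> real (card A) * (1 / r)"
    unfolding l1dist_def using sum_bounded_above[of A "\<lambda>a. \<bar>s a - k a\<bar>" "1 / r"] by auto
  then show ?thesis
    by simp
qed

lemma totally_bounded_simplex_face:
  assumes "finite A" "S \<subseteq> simplex_face A F" "e > 0"
  shows "\<exists>K. finite K \<and> K \<subseteq> S \<and> (\<forall>s\<in>S. \<exists>k\<in>K. l1dist A s k < e)"
proof -
  obtain N :: nat where N: "real (card A) / e < real N"
    using reals_Archimedean2 by blast
  moreover have "0 \<le> real (card A) / e"
    using assms(3) by simp
  ultimately have N_pos: "0 < real N"
    by linarith
  \<comment> \<open>one representative for each occupied cell of the grid of mesh \<open>1 / N\<close>\<close>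
  define cell where "cell z = (\<lambda>a. if a \<in> A then \<lfloor>z a * real N\<rfloor> else 0)" for z :: "'a \<Rightarrow> real"
  have "cell ` S \<subseteq> {f. \<forall>x. (x \<in> A \<longrightarrow> f x \<in> {0..int N}) \<and> (x \<notin> A \<longrightarrow> f x = 0)}"
  proof clarify
    fix z x assume "z \<in> S"
    then have "0 \<le> z x \<and> z x \<le> 1" if "x \<in> A"
      using simplex_face_coord_bounds[OF assms(1) _ that] assms(2) by blast
    then have "x \<in> A \<Longrightarrow> 0 \<le> z x * real N \<and> z x * real N \<le> real N"
      by (simp add: mult_left_le_one_le)
    then have "x \<in> A \<Longrightarrow> 0 \<le> \<lfloor>z x * real N\<rfloor> \<and> \<lfloor>z x * real N\<rfloor> \<le> int N"
      by linarith
    then show "(x \<in> A \<longrightarrow> cell z x \<in> {0..int N}) \<and> (x \<notin> A \<longrightarrow> cell z x = 0)"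
      unfolding cell_def by auto
  qed
  then have fin: "finite (cell ` S)"
    by (rule finite_subset) (rule finite_set_of_finite_funs[OF assms(1)]; simp)
  define rep where "rep v = (SOME s. s \<in> S \<and> cell s = v)" for v
  have rep: "rep (cell s) \<in> S \<and> cell (rep (cell s)) = cell s" if "s \<in> S" for s
    unfolding rep_def by (rule someI[of _ s]) (use that in auto)
  have "l1dist A s (rep (cell s)) < e" if "s \<in> S" for s
  proof -
    have "\<forall>a\<in>A. \<lfloor>s a * real N\<rfloor> = \<lfloor>rep (cell s) a * real N\<rfloor>"
      using rep[OF that] unfolding cell_def by (metis (mono_tags, lifting))
    then have "l1dist A s (rep (cell s)) \<le> real (card A) / real N"
      using N_pos by (rule l1dist_le_of_floor_eq[rotated])
    also have "\<dots> < e"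
      using N N_pos assms(3) by (simp add: field_simps)
    finally show ?thesis .
  qed
  then show ?thesis
    using fin rep by (intro exI[of _ "rep ` cell ` S"]) auto
qed

section \<open>Faces of the regular subdivision\<close>

definition max_face :: "(real^'d) set \<Rightarrow> (real^'d \<Rightarrow> real) \<Rightarrow> real^'d \<Rightarrow> (real^'d) set" where
  "max_face A lam c = {a\<in>A. \<forall>b\<in>A. lam b + c \<bullet> b \<le> lam a + c \<bullet> a}"

lemma max_face_subset: "max_face A lam c \<subseteq> A"
  unfolding max_face_def by auto

lemma max_face_nonempty:
  assumes "finite A" "A \<noteq> {}"
  shows "max_face A lam c \<noteq> {}"
proof -
  define f where "f b = lam b + c \<bullet> b" for b
  have "Max (f ` A) \<in> f ` A"
    using assms by (intro Max_in) auto
  then obtain a where a: "a \<in> A" "f a = Max (f ` A)"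
    by auto
  have "f b \<le> f a" if "b \<in> A" for b
    unfolding a(2) using assms(1) that by (intro Max_ge) auto
  then have "a \<in> max_face A lam c"
    using a(1) unfolding max_face_def f_def by blast
  then show ?thesis
    by blast
qed

lemma max_face_value_eq:
  "a \<in> max_face A lam c \<Longrightarrow> b \<in> max_face A lam c \<Longrightarrow> lam a + c \<bullet> a = lam b + c \<bullet> b"
  unfolding max_face_def by (simp add: order_antisym)

lemma max_face_value_less:
  assumes "a \<in> max_face A lam c" "b \<in> A - max_face A lam c"
  shows "lam b + c \<bullet> b < lam a + c \<bullet> a"
proof -
  obtain b' where b': "b' \<in> A" "lam b + c \<bullet> b < lam b' + c \<bullet> b'"
    using assms(2) unfolding max_face_def by (auto simp: not_le)
  moreover have "lam b' + c \<bullet> b' \<le> lam a + c \<bullet> a"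
    using assms(1) b'(1) unfolding max_face_def by blast
  ultimately show ?thesis
    by linarith
qed

lemma inner_Pair_right: "(c :: 'a::real_inner \<times> real) \<bullet> (x, y) = fst c \<bullet> x + snd c * y"
  by (cases c) (simp add: inner_Pair)

lemma lifted_point_in_polytope: "a \<in> A \<Longrightarrow> (a, lam a) \<in> lifted_polytope A lam"
  unfolding lifted_polytope_def by (rule hull_inc) auto

lemma lifted_polytope_le:
  assumes "\<forall>a\<in>A. c \<bullet> (a, lam a) \<le> M" "p \<in> lifted_polytope A lam"
  shows "c \<bullet> p \<le> M"
proof -
  have "lifted_polytope A lam \<subseteq> {x. c \<bullet> x \<le> M}"
    unfolding lifted_polytope_def using assms(1) by (intro hull_minimal) (auto simp: convex_halfspace_le)
  then show ?thesis
    using assms(2) by blast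
qed

lemma lifted_point_maximises_iff:
  assumes "a \<in> A"
  shows "(\<forall>q\<in>lifted_polytope A lam. n \<bullet> q \<le> n \<bullet> (a, lam a))
           \<longleftrightarrow> (\<forall>b\<in>A. n \<bullet> (b, lam b) \<le> n \<bullet> (a, lam a))"
proof
  assume "\<forall>q\<in>lifted_polytope A lam. n \<bullet> q \<le> n \<bullet> (a, lam a)"
  then show "\<forall>b\<in>A. n \<bullet> (b, lam b) \<le> n \<bullet> (a, lam a)"
    using lifted_point_in_polytope by blast
next
  assume "\<forall>b\<in>A. n \<bullet> (b, lam b) \<le> n \<bullet> (a, lam a)"
  then show "\<forall>q\<in>lifted_polytope A lam. n \<bullet> q \<le> n \<bullet> (a, lam a)"
    using lifted_polytope_le[of A n lam] by blast
qed

lemma maximisers_face_of: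
  fixes S :: "'a::real_inner set"
  assumes "convex S" "p \<in> S" "\<forall>q\<in>S. n \<bullet> q \<le> n \<bullet> p"
  shows "{x \<in> S. \<forall>q\<in>S. n \<bullet> q \<le> n \<bullet> x} face_of S"
proof -
  have "{x \<in> S. \<forall>q\<in>S. n \<bullet> q \<le> n \<bullet> x} = S \<inter> {x. n \<bullet> x = n \<bullet> p}"
  proof (intro set_eqI iffI)
    fix x assume "x \<in> {x \<in> S. \<forall>q\<in>S. n \<bullet> q \<le> n \<bullet> x}"
    then show "x \<in> S \<inter> {x. n \<bullet> x = n \<bullet> p}"
      using assms(2,3) by (simp add: order_antisym)
  next
    fix x assume "x \<in> S \<inter> {x. n \<bullet> x = n \<bullet> p}"
    then show "x \<in> {x \<in> S. \<forall>q\<in>S. n \<bullet> q \<le> n \<bullet> x}"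
      using assms(3) by simp
  qed
  also have "\<dots> face_of S"
    using assms(1,3) by (intro face_of_Int_supporting_hyperplane_le) auto
  finally show ?thesis .
qed

lemma max_face_in_reg_subdiv:
  fixes c :: "real^'d"
  assumes "finite A" "A \<noteq> {}"
  shows "max_face A lam c \<in> reg_subdiv A lam"
proof -
  define P where "P = lifted_polytope A lam"
  define n :: "(real^'d) \<times> real" where "n = (c, 1)"
  define FF where "FF = {p \<in> P. \<forall>q\<in>P. n \<bullet> q \<le> n \<bullet> p}"
  have val: "n \<bullet> (b, lam b) = lam b + c \<bullet> b" for b
    unfolding n_def by (simp add: inner_Pair)
  have max_face_eq: "max_face A lam c = {a \<in> A. \<forall>q\<in>P. n \<bullet> q \<le> n \<bullet> (a, lam a)}"
    unfolding max_face_def P_def using lifted_point_maximises_iff[of _ A lam n] by (auto simp: val)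
  obtain a0 where "a0 \<in> max_face A lam c"
    using max_face_nonempty[OF assms] by blast
  then have "FF face_of P"
    unfolding FF_def P_def lifted_polytope_def max_face_eq
    by (intro maximisers_face_of[of _ "(a0, lam a0)"]) (auto intro: hull_inc simp: P_def lifted_polytope_def)
  then have "upper_face P FF"
    unfolding upper_face_def FF_def by (intro conjI exI[of _ n]) (auto simp: n_def)
  moreover have "max_face A lam c = {a \<in> A. (a, lam a) \<in> FF}"
    unfolding max_face_eq FF_def P_def using lifted_point_in_polytope by blast
  ultimately show ?thesis
    unfolding reg_subdiv_def P_def by blast
qed

lemma reg_subdiv_imp_max_face:
  assumes "F \<in> reg_subdiv A lam"
  obtains c where "F = max_face A lam c"
proof -
  obtain FF n where F: "F = {a \<in> A. (a, lam a) \<in> FF}" and n: "snd n > 0"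
    and FF: "FF = {p \<in> lifted_polytope A lam. \<forall>q\<in>lifted_polytope A lam. n \<bullet> q \<le> n \<bullet> p}"
    using assms unfolding reg_subdiv_def upper_face_def by blast
  define c where "c = (1 / snd n) *\<^sub>R fst n"
  have val: "n \<bullet> (b, lam b) = snd n * (lam b + c \<bullet> b)" for b
    using n unfolding inner_Pair_right c_def by (simp add: algebra_simps)
  have "F = {a \<in> A. \<forall>b\<in>A. n \<bullet> (b, lam b) \<le> n \<bullet> (a, lam a)}"
    unfolding F FF using lifted_point_in_polytope lifted_point_maximises_iff by blast
  also have "\<dots> = max_face A lam c"
    unfolding val max_face_def using n by simp
  finally show ?thesis
    by (rule that)
qed

lemma reg_subdiv_eq_range_max_face:
  assumes "finite A" "A \<noteq> {}"
  shows "reg_subdiv A lam = range (max_face A lam)"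
  using max_face_in_reg_subdiv[OF assms] reg_subdiv_imp_max_face by blast

section \<open>Near-maximisers lie in a common face\<close>

lemma eventually_vertical_shift_in_halfspace:
  fixes n p :: "'a::real_inner \<times> real"
  assumes le: "n \<bullet> p \<le> b" and strict: "0 < snd n \<Longrightarrow> n \<bullet> p < b"
  shows "eventually (\<lambda>h. n \<bullet> (p + (0, h)) \<le> b) (at_right 0)"
proof -
  have val: "n \<bullet> (p + (0, h)) = n \<bullet> p + snd n * h" for h
    by (simp add: inner_add_right inner_Pair_right)
  show ?thesis
  proof (cases "snd n \<le> 0")
    case True
    have "n \<bullet> (p + (0, h)) \<le> b" if "0 < h" for h
      using True that le mult_nonpos_nonneg[of "snd n" h] by (simp add: val)
    then show ?thesis
      using eventually_at_right_less[of "0::real"] by (rule eventually_mono[rotated])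
  next
    case False
    have "((\<lambda>h. snd n * h) \<longlongrightarrow> 0) (at_right (0::real))"
      by (intro tendsto_mult_right_zero tendsto_ident_at)
    moreover have "0 < b - n \<bullet> p"
      using False strict by simp
    ultimately have "eventually (\<lambda>h. snd n * h < b - n \<bullet> p) (at_right 0)"
      by (rule order_tendstoD(2))
    then show ?thesis
      by eventually_elim (simp add: val)
  qed
qed

lemma polyhedron_upper_supporting_halfspace:
  fixes P :: "('a::euclidean_space \<times> real) set"
  assumes "polyhedron P" "p \<in> P" and top: "\<And>h. 0 < h \<Longrightarrow> p + (0, h) \<notin> P"
  obtains n b where "\<forall>x\<in>P. n \<bullet> x \<le> b" "n \<bullet> p = b" "snd n > 0"
proof -
  obtain \<F> where fin: "finite \<F>" and P: "P = \<Inter>\<F>"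
    and halfspaces: "\<forall>H\<in>\<F>. \<exists>n b. n \<noteq> 0 \<and> H = {x. n \<bullet> x \<le> b}"
    using assms(1) unfolding polyhedron_def by blast
  have "\<exists>n b. {x. n \<bullet> x \<le> b} \<in> \<F> \<and> n \<bullet> p = b \<and> snd n > 0"
  proof (rule ccontr)
    assume no_active: "\<not> (\<exists>n b. {x. n \<bullet> x \<le> b} \<in> \<F> \<and> n \<bullet> p = b \<and> snd n > 0)"
    have "eventually (\<lambda>h. p + (0, h) \<in> H) (at_right 0)" if H\<F>: "H \<in> \<F>" for H
    proof -
      obtain n b where H: "H = {x. n \<bullet> x \<le> b}"
        using halfspaces H\<F> by blast
      have "n \<bullet> p \<le> b"
        using assms(2) P H H\<F> by blast
      moreover have "n \<bullet> p \<noteq> b" if "0 < snd n"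
        using no_active H\<F> that unfolding H by blast
      ultimately show ?thesis
        unfolding H mem_Collect_eq by (intro eventually_vertical_shift_in_halfspace) auto
    qed
    then have "eventually (\<lambda>h. \<forall>H\<in>\<F>. p + (0, h) \<in> H) (at_right (0::real))"
      by (intro eventually_ball_finite[OF fin]) blast
    then have "eventually (\<lambda>h. 0 < h \<and> (\<forall>H\<in>\<F>. p + (0, h) \<in> H)) (at_right (0::real))"
      using eventually_at_right_less[of "0::real"] by (simp add: eventually_conj_iff)
    then obtain h :: real where "0 < h" "p + (0, h) \<in> P"
      unfolding P using eventually_happens'[OF trivial_limit_at_right_real] by blast
    then show False
      using top by blast
  qed
  then obtain n b where "{x. n \<bullet> x \<le> b} \<in> \<F>" "n \<bullet> p = b" "snd n > 0"
    by blast
  moreover from this(1) have "\<forall>x\<in>P. n \<bullet> x \<le> b"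
    unfolding P by blast
  ultimately show ?thesis
    using that by blast
qed

lemma exists_le_of_sum_le:
  fixes g :: "'a \<Rightarrow> real"
  assumes "finite G" "G \<noteq> {}" "sum g G \<le> real (card G) * C"
  shows "\<exists>a\<in>G. g a \<le> C"
proof (rule ccontr)
  assume "\<not> (\<exists>a\<in>G. g a \<le> C)"
  then have "(\<Sum>a\<in>G. C) < sum g G"
    using assms(1,2) by (intro sum_strict_mono) auto
  then show False
    using assms(3) by simp
qed

lemma uniform_gap_if_above_barycentre:
  fixes A :: "(real^'d) set"
  assumes "finite A" "G \<subseteq> A" "G \<noteq> {}"
    and p: "real (card G) *\<^sub>R p = (\<Sum>a\<in>G. (a, lam a))"
    and above: "p + (0, \<eta>) \<in> lifted_polytope A lam"
  shows "\<exists>a\<in>G. \<exists>b\<in>A. lam a + v \<bullet> a + \<eta> \<le> lam b + v \<bullet> b"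
proof -
  have finG: "finite G"
    using assms(1,2) finite_subset by blast
  obtain b where b: "b \<in> max_face A lam v"
    using max_face_nonempty assms(1-3) by blast
  then have bA: "b \<in> A"
    using max_face_subset by blast
  have "\<forall>a\<in>A. (v, 1) \<bullet> (a, lam a) \<le> lam b + v \<bullet> b"
    using b unfolding max_face_def by (simp add: inner_Pair add.commute)
  then have "(v, 1) \<bullet> (p + (0, \<eta>)) \<le> lam b + v \<bullet> b"
    using above by (rule lifted_polytope_le)
  then have "real (card G) * ((v, 1) \<bullet> p + \<eta>) \<le> real (card G) * (lam b + v \<bullet> b)"
    by (simp add: inner_add_right inner_Pair mult_left_mono)
  moreover have "real (card G) * ((v, 1) \<bullet> p) = (\<Sum>a\<in>G. lam a + v \<bullet> a)"
    using arg_cong[OF p, of "inner (v, 1)"] by (simp add: inner_sum_right inner_Pair add.commute)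
  ultimately have "(\<Sum>a\<in>G. lam a + v \<bullet> a + \<eta>) \<le> real (card G) * (lam b + v \<bullet> b)"
    by (simp add: sum.distrib distrib_left)
  then show ?thesis
    using exists_le_of_sum_le[OF finG assms(3)] bA by blast
qed

lemma subset_max_face_if_supported:
  fixes A :: "(real^'d) set"
  assumes "finite G" "G \<subseteq> A"
    and supp: "\<forall>x\<in>lifted_polytope A lam. n \<bullet> x \<le> b" and "snd n > 0"
    and sum_eq: "n \<bullet> (\<Sum>a\<in>G. (a, lam a)) = real (card G) * b"
  shows "G \<subseteq> max_face A lam ((1 / snd n) *\<^sub>R fst n)"
proof
  define c where "c = (1 / snd n) *\<^sub>R fst n"
  have val: "n \<bullet> (x, lam x) = snd n * (lam x + c \<bullet> x)" for x
    using assms(4) unfolding inner_Pair_right c_def by (simp add: algebra_simps)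
  have le_b: "n \<bullet> (x, lam x) \<le> b" if "x \<in> A" for x
    using supp that lifted_point_in_polytope by blast
  have zero: "(\<Sum>x\<in>G. b - n \<bullet> (x, lam x)) = 0"
    using sum_eq by (simp add: sum_subtractf inner_sum_right)
  have nonneg: "0 \<le> b - n \<bullet> (x, lam x)" if "x \<in> G" for x
    using le_b[of x] assms(2) that by (simp add: subset_iff)
  have on_G: "n \<bullet> (x, lam x) = b" if "x \<in> G" for x
    using iffD1[OF sum_nonneg_eq_0_iff[OF assms(1) nonneg] zero] that by simp
  fix a assume a: "a \<in> G"
  have "snd n * (lam x + c \<bullet> x) \<le> snd n * (lam a + c \<bullet> a)" if "x \<in> A" for x
    using le_b[OF that] on_G[OF a] unfolding val by simp
  then have "lam x + c \<bullet> x \<le> lam a + c \<bullet> a" if "x \<in> A" for x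
    using that assms(4) by (simp add: mult_le_cancel_left_pos)
  then show "a \<in> max_face A lam ((1 / snd n) *\<^sub>R fst n)"
    using a assms(2) unfolding max_face_def c_def[symmetric] by blast
qed

lemma subset_max_face_or_uniform_gap:
  fixes A :: "(real^'d) set"
  assumes "finite A" "G \<subseteq> A" "G \<noteq> {}"
  shows "(\<exists>c. G \<subseteq> max_face A lam c) \<or> (\<exists>\<eta>>0. \<forall>v. \<exists>a\<in>G. \<exists>b\<in>A. lam a + v \<bullet> a + \<eta> \<le> lam b + v \<bullet> b)"
proof -
  define P where "P = lifted_polytope A lam"
  have finG: "finite G"
    using assms(1,2) finite_subset by blast
  have card_pos: "0 < real (card G)"
    using finG assms(3) by (simp add: card_gt_0_iff)
  define p where "p = (1 / real (card G)) *\<^sub>R (\<Sum>a\<in>G. (a, lam a))"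
  have p_sum: "real (card G) *\<^sub>R p = (\<Sum>a\<in>G. (a, lam a))"
    unfolding p_def using card_pos by simp
  have pP: "p \<in> P"
    unfolding p_def P_def lifted_polytope_def scaleR_sum_right
  proof (rule convex_sum[OF finG convex_convex_hull])
    show "(\<Sum>i\<in>G. 1 / real (card G)) = 1"
      using card_pos by simp
    show "\<And>i. i \<in> G \<Longrightarrow> (i, lam i) \<in> convex hull (\<lambda>a. (a, lam a)) ` A"
      using assms(2) by (intro hull_inc) auto
  qed simp
  show ?thesis
  proof (cases "\<exists>\<eta>>0. p + (0, \<eta>) \<in> P")
    case True
    then obtain \<eta> where "\<eta> > 0" "p + (0, \<eta>) \<in> P"
      by blast
    then show ?thesis
      using uniform_gap_if_above_barycentre[OF assms p_sum] unfolding P_def by blast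
  next
    case False
    then have top: "\<And>h. 0 < h \<Longrightarrow> p + (0, h) \<notin> P"
      by blast
    have "polyhedron P"
      unfolding P_def lifted_polytope_def using assms(1)
      by (intro polytope_imp_polyhedron) (auto simp: polytope_def)
    then obtain n b where supp: "\<forall>x\<in>P. n \<bullet> x \<le> b" and "n \<bullet> p = b" and "snd n > 0"
      using pP top by (rule polyhedron_upper_supporting_halfspace)
    moreover have "n \<bullet> (\<Sum>a\<in>G. (a, lam a)) = real (card G) * b"
      unfolding p_sum[symmetric] using \<open>n \<bullet> p = b\<close> by simp
    ultimately have "G \<subseteq> max_face A lam ((1 / snd n) *\<^sub>R fst n)"
      unfolding P_def using subset_max_face_if_supported[OF finG assms(2)] by blast
    then show ?thesis
      by blast
  qed
qed

lemma uniform_near_maximisers_in_max_face: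
  fixes A :: "(real^'d) set"
  assumes "finite A"
  obtains \<delta> where "\<delta> > 0"
    and "\<And>v. \<exists>c. {a\<in>A. \<forall>b\<in>A. lam b + v \<bullet> b < lam a + v \<bullet> a + \<delta>} \<subseteq> max_face A lam c"
proof -
  \<comment> \<open>the finitely many subsets of \<open>A\<close> lying in no face each have a uniform gap\<close>
  define bad where "bad = {G. G \<subseteq> A \<and> G \<noteq> {} \<and> \<not> (\<exists>c. G \<subseteq> max_face A lam c)}"
  have fin_bad: "finite bad"
    using assms by (rule finite_subset[rotated, OF finite_Pow_iff[THEN iffD2]]) (auto simp: bad_def)
  have "\<forall>G\<in>bad. \<exists>\<eta>>0. \<forall>v. \<exists>a\<in>G. \<exists>b\<in>A. lam a + v \<bullet> a + \<eta> \<le> lam b + v \<bullet> b"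
    using subset_max_face_or_uniform_gap[OF assms] unfolding bad_def by blast
  then obtain gap where gap: "\<And>G. G \<in> bad \<Longrightarrow> gap G > 0"
    "\<And>G v. G \<in> bad \<Longrightarrow> \<exists>a\<in>G. \<exists>b\<in>A. lam a + v \<bullet> a + gap G \<le> lam b + v \<bullet> b"
    by metis
  define \<delta> where "\<delta> = Min (insert 1 (gap ` bad))"
  have "\<delta> > 0"
    unfolding \<delta>_def using fin_bad gap(1) by (subst Min_gr_iff) auto
  have \<delta>_le: "\<delta> \<le> gap G" if "G \<in> bad" for G
    unfolding \<delta>_def using fin_bad that by (intro Min_le) auto
  have "\<exists>c. {a\<in>A. \<forall>b\<in>A. lam b + v \<bullet> b < lam a + v \<bullet> a + \<delta>} \<subseteq> max_face A lam c" for v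
  proof (rule ccontr)
    define G where "G = {a\<in>A. \<forall>b\<in>A. lam b + v \<bullet> b < lam a + v \<bullet> a + \<delta>}"
    assume "\<nexists>c. {a\<in>A. \<forall>b\<in>A. lam b + v \<bullet> b < lam a + v \<bullet> a + \<delta>} \<subseteq> max_face A lam c"
    then have "G \<in> bad"
      unfolding bad_def G_def by blast
    then obtain a b where "a \<in> G" "b \<in> A" "lam a + v \<bullet> a + gap G \<le> lam b + v \<bullet> b"
      using gap(2) by blast
    moreover have "lam b + v \<bullet> b < lam a + v \<bullet> a + \<delta>"
      using \<open>a \<in> G\<close> \<open>b \<in> A\<close> unfolding G_def by blast
    ultimately show False
      using \<delta>_le[OF \<open>G \<in> bad\<close>] by linarith
  qed
  then show ?thesis
    using that \<open>\<delta> > 0\<close> by blast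
qed

section \<open>Convergence of the torus orbits\<close>

lemma l1dist_normalize_on_exp_le:
  fixes f w :: "'a \<Rightarrow> real"
  assumes "finite A" "F \<subseteq> A" "F \<noteq> {}" "\<forall>a\<in>A. 0 < w a" "0 \<le> t" "b \<in> A"
    and gap: "\<forall>a\<in>A - F. f a + \<delta> \<le> f b"
  shows "l1dist A (normalize_on A (\<lambda>a. w a * exp (t * f a))) (normalize_on F (\<lambda>a. w a * exp (t * f a)))
           \<le> 2 * (sum w A / Min (w ` A)) * exp (- (t * \<delta>))"
proof -
  define p where "p a = w a * exp (t * f a)" for a
  define wmin where "wmin = Min (w ` A)"
  have wmin_pos: "0 < wmin"
    unfolding wmin_def using assms(1,4,6) by (subst Min_gr_iff) auto
  have wmin_le: "wmin \<le> w b"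
    unfolding wmin_def using assms(1,6) by (intro Min_le) auto
  have p_pos: "\<forall>a\<in>A. 0 < p a"
    unfolding p_def using assms(4) by simp
  have "wmin * exp (t * f b) \<le> p b"
    unfolding p_def using wmin_le by (intro mult_right_mono) auto
  also have "\<dots> \<le> sum p A"
    using assms(1,6) p_pos by (intro member_le_sum) (auto intro: less_imp_le)
  finally have lower: "wmin * exp (t * f b) \<le> sum p A" .
  have "sum p (A - F) \<le> (\<Sum>a\<in>A - F. w a * exp (t * (f b - \<delta>)))"
  proof (rule sum_mono)
    fix a assume "a \<in> A - F"
    then have "f a + \<delta> \<le> f b"
      using gap by blast
    then have "t * f a \<le> t * (f b - \<delta>)"
      using assms(5) by (intro mult_left_mono) auto
    then show "p a \<le> w a * exp (t * (f b - \<delta>))"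
      unfolding p_def using assms(4) \<open>a \<in> A - F\<close> by (intro mult_left_mono) auto
  qed
  also have "\<dots> \<le> (\<Sum>a\<in>A. w a * exp (t * (f b - \<delta>)))"
    using assms(1,4) by (intro sum_mono2) (auto intro: less_imp_le)
  also have "\<dots> = sum w A * exp (t * f b) * exp (- (t * \<delta>))"
    by (simp add: sum_distrib_right[symmetric] mult.assoc exp_add[symmetric] right_diff_distrib)
  finally have upper: "sum p (A - F) \<le> sum w A * exp (t * f b) * exp (- (t * \<delta>))" .
  have "0 \<le> sum w A"
    using assms(4) by (intro sum_nonneg) (auto intro: less_imp_le)
  have "l1dist A (normalize_on A p) (normalize_on F p) = 2 * sum p (A - F) / sum p A"
    using assms(1-3) p_pos by (rule l1dist_normalize_on_subset)
  also have "\<dots> \<le> 2 * (sum w A * exp (t * f b) * exp (- (t * \<delta>))) / (wmin * exp (t * f b))"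
    using upper lower wmin_pos p_pos \<open>0 \<le> sum w A\<close>
    by (intro frac_le mult_left_mono sum_nonneg) (auto intro: less_imp_le)
  also have "\<dots> = 2 * (sum w A / wmin) * exp (- (t * \<delta>))"
    by simp
  finally show ?thesis
    unfolding p_def wmin_def .
qed

lemma max_face_gap:
  fixes A :: "(real^'d) set"
  assumes "finite A" "b \<in> max_face A lam c"
  obtains \<delta> where "\<delta> > 0" "\<forall>a\<in>A - max_face A lam c. lam a + c \<bullet> a + \<delta> \<le> lam b + c \<bullet> b"
proof -
  define gaps where "gaps = (\<lambda>a. lam b + c \<bullet> b - (lam a + c \<bullet> a)) ` (A - max_face A lam c)"
  define \<delta> where "\<delta> = Min (insert 1 gaps)"
  have fin: "finite gaps"
    unfolding gaps_def using assms(1) by simp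
  have "\<forall>g\<in>gaps. 0 < g"
    unfolding gaps_def using max_face_value_less[OF assms(2)] by simp
  then have "\<delta> > 0"
    unfolding \<delta>_def using fin by (subst Min_gr_iff) auto
  moreover have "\<delta> \<le> lam b + c \<bullet> b - (lam a + c \<bullet> a)" if "a \<in> A - max_face A lam c" for a
    unfolding \<delta>_def gaps_def using fin that by (intro Min_le) (auto simp: gaps_def)
  ultimately show ?thesis
    using that by force
qed

lemma torus_act_one_param_normalize_on:
  assumes "finite A" "A \<noteq> {}" "\<forall>a\<in>A. 0 < w a"
  shows "torus_act A (one_param lam t) (normalize_on A (\<lambda>a. w a * exp (a \<bullet> u)))
           = normalize_on A (\<lambda>a. w a * exp (t * lam a + a \<bullet> u))"
proof -
  have "sum (\<lambda>a. w a * exp (a \<bullet> u)) A \<noteq> 0"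
    using assms by (intro order.strict_implies_not_eq[symmetric] sum_pos) auto
  then show ?thesis
    unfolding torus_act_normalize_on[OF \<open>_ \<noteq> 0\<close>] one_param_def by (simp add: exp_add mult.left_commute)
qed

lemma normalize_on_max_face_shift:
  "normalize_on (max_face A lam c) (\<lambda>a. w a * exp (t * lam a + a \<bullet> u))
     = normalize_on (max_face A lam c) (\<lambda>a. w a * exp (a \<bullet> (u - t *\<^sub>R c)))"
proof (cases "max_face A lam c = {}")
  case True
  then show ?thesis
    by (simp add: normalize_on_def)
next
  case False
  then obtain b where b: "b \<in> max_face A lam c"
    by blast
  define M where "M = lam b + c \<bullet> b"
  have "w a * exp (t * lam a + a \<bullet> u) = exp (t * M) * (w a * exp (a \<bullet> (u - t *\<^sub>R c)))"
    if "a \<in> max_face A lam c" for a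
  proof -
    have "t * lam a + a \<bullet> u = t * (lam a + c \<bullet> a) + a \<bullet> (u - t *\<^sub>R c)"
      by (simp add: inner_diff_right inner_commute algebra_simps)
    also have "lam a + c \<bullet> a = M"
      using max_face_value_eq[OF that b] unfolding M_def .
    finally have "t * lam a + a \<bullet> u = t * M + a \<bullet> (u - t *\<^sub>R c)" .
    then show ?thesis
      by (simp add: exp_add)
  qed
  then have "normalize_on (max_face A lam c) (\<lambda>a. w a * exp (t * lam a + a \<bullet> u))
      = normalize_on (max_face A lam c) (\<lambda>a. exp (t * M) * (w a * exp (a \<bullet> (u - t *\<^sub>R c))))"
    by (rule normalize_on_cong)
  then show ?thesis
    by (simp add: normalize_on_scale)
qed

lemma subdiv_var_reg_subdiv:
  assumes "finite A" "A \<noteq> {}"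
  shows "subdiv_var A (reg_subdiv A lam) w = (\<Union>c. toric_var A (max_face A lam c) w)"
  unfolding subdiv_var_def reg_subdiv_eq_range_max_face[OF assms] by simp

lemma tendsto_exp_mult_neg_at_top: "(k::real) < 0 \<Longrightarrow> ((\<lambda>t. exp (t * k)) \<longlongrightarrow> 0) at_top"
  using exp_at_top exp_powr_real tendsto_neg_powr by fastforce

lemma gap_outside_near_maximisers:
  fixes f :: "'a \<Rightarrow> real"
  assumes "{a\<in>A. \<forall>b\<in>A. f b < f a + \<delta>} \<subseteq> F" "b \<in> A" "\<forall>x\<in>A. f x \<le> f b"
  shows "\<forall>a\<in>A - F. f a + \<delta> \<le> f b"
proof
  fix a assume a: "a \<in> A - F"
  then obtain b' where "b' \<in> A" "\<not> f b' < f a + \<delta>"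
    using assms(1) by blast
  then show "f a + \<delta> \<le> f b"
    using assms(3) by force
qed

lemma toric_orbit_point_near_subdiv_var:
  fixes A :: "(real^'d) set"
  assumes "finite A" "A \<noteq> {}" "\<forall>a\<in>A. 0 < w a" "0 < t"
    and near: "\<And>v. \<exists>c. {a\<in>A. \<forall>b\<in>A. lam b + v \<bullet> b < lam a + v \<bullet> a + \<delta>} \<subseteq> max_face A lam c"
  shows "\<exists>z\<in>subdiv_var A (reg_subdiv A lam) w.
           l1dist A (torus_act A (one_param lam t) (normalize_on A (\<lambda>a. w a * exp (a \<bullet> u)))) z
             \<le> 2 * (sum w A / Min (w ` A)) * exp (- (t * \<delta>))"
proof -
  define v where "v = (1 / t) *\<^sub>R u"
  obtain c where c: "{a\<in>A. \<forall>b\<in>A. lam b + v \<bullet> b < lam a + v \<bullet> a + \<delta>} \<subseteq> max_face A lam c"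
    using near by blast
  define F where "F = max_face A lam c"
  have F: "F \<subseteq> A" "F \<noteq> {}"
    unfolding F_def using max_face_subset max_face_nonempty[OF assms(1,2)] by auto
  obtain b where b: "b \<in> max_face A lam v"
    using max_face_nonempty[OF assms(1,2)] by blast
  then have bA: "b \<in> A"
    using max_face_subset by blast
  have "\<forall>x\<in>A. lam x + v \<bullet> x \<le> lam b + v \<bullet> b"
    using b unfolding max_face_def by blast
  with c have gap: "\<forall>a\<in>A - F. lam a + v \<bullet> a + \<delta> \<le> lam b + v \<bullet> b"
    unfolding F_def by (rule gap_outside_near_maximisers[OF _ bA])
  have exponent: "t * lam a + a \<bullet> u = t * (lam a + v \<bullet> a)" for a
    unfolding v_def using assms(4) by (simp add: inner_commute algebra_simps)
  define z where "z = normalize_on F (\<lambda>a. w a * exp (t * lam a + a \<bullet> u))"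
  have "z = normalize_on F (\<lambda>a. w a * exp (a \<bullet> (u - t *\<^sub>R c)))"
    unfolding z_def F_def by (rule normalize_on_max_face_shift)
  moreover have "normalize_on F (\<lambda>a. w a * exp (a \<bullet> (u - t *\<^sub>R c))) \<in> toric_var A F w"
    using F assms(3) by (intro normalize_on_in_toric_var[OF assms(1)]) auto
  ultimately have "z \<in> subdiv_var A (reg_subdiv A lam) w"
    unfolding subdiv_var_reg_subdiv[OF assms(1,2)] F_def by blast
  moreover have "l1dist A (normalize_on A (\<lambda>a. w a * exp (t * (lam a + v \<bullet> a))))
      (normalize_on F (\<lambda>a. w a * exp (t * (lam a + v \<bullet> a)))) \<le> 2 * (sum w A / Min (w ` A)) * exp (- (t * \<delta>))"
    using assms(4) by (intro l1dist_normalize_on_exp_le[OF assms(1) F assms(3) _ bA gap]) simp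
  then have "l1dist A (torus_act A (one_param lam t) (normalize_on A (\<lambda>a. w a * exp (a \<bullet> u)))) z
      \<le> 2 * (sum w A / Min (w ` A)) * exp (- (t * \<delta>))"
    unfolding torus_act_one_param_normalize_on[OF assms(1-3)] z_def exponent .
  ultimately show ?thesis
    by blast
qed

lemma l1dist_torus_act_one_param_le:
  assumes "finite A" "A \<noteq> {}"
  obtains K where "0 \<le> K"
    and "\<And>z s. z \<in> simplex_face A A \<Longrightarrow> s \<in> simplex_face A A \<Longrightarrow>
           l1dist A (torus_act A (one_param lam t) z) (torus_act A (one_param lam t) s) \<le> K * l1dist A z s"
proof -
  define U where "U = one_param lam t"
  have U_pos: "0 < Min (U ` A)"
    unfolding U_def one_param_def using assms by (subst Min_gr_iff) auto
  have "0 < Max (U ` A)"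
    unfolding U_def one_param_def using assms by (subst Max_gr_iff) auto
  then have "0 \<le> 2 * Max (U ` A) / Min (U ` A)"
    using U_pos by simp
  moreover have "\<forall>a\<in>A. Min (U ` A) \<le> U a \<and> U a \<le> Max (U ` A)"
    using assms(1) by simp
  ultimately show ?thesis
    using that l1dist_torus_act_le[OF assms(1) U_pos] unfolding U_def by blast
qed

lemma torus_orbit_near_subdiv_var:
  fixes A :: "(real^'d) set"
  assumes "finite A" "A \<noteq> {}" "\<forall>a\<in>A. 0 < w a" "0 < t" "0 < e"
    and near: "\<And>v. \<exists>c. {a\<in>A. \<forall>b\<in>A. lam b + v \<bullet> b < lam a + v \<bullet> a + \<delta>} \<subseteq> max_face A lam c"
    and small: "2 * (sum w A / Min (w ` A)) * exp (- (t * \<delta>)) < e / 2"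
    and y: "y \<in> torus_act A (one_param lam t) ` toric_var A A w"
  shows "\<exists>z\<in>subdiv_var A (reg_subdiv A lam) w. l1dist A y z \<le> e"
proof -
  obtain s where s: "s \<in> toric_var A A w" and y: "y = torus_act A (one_param lam t) s"
    using y by blast
  obtain K where "0 \<le> K" and lipschitz: "\<And>z s. z \<in> simplex_face A A \<Longrightarrow> s \<in> simplex_face A A \<Longrightarrow>
      l1dist A (torus_act A (one_param lam t) z) (torus_act A (one_param lam t) s) \<le> K * l1dist A z s"
    using l1dist_torus_act_one_param_le[OF assms(1,2)] by blast
  \<comment> \<open>the torus point \<open>s'\<close> is so close to \<open>s\<close> that their images are \<open>e / 2\<close>-close\<close>
  have "0 < e / 2 / (K + 1)"
    using assms(5) \<open>0 \<le> K\<close> by simp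
  then obtain s' where "s' \<in> toric_point A w ` pos_orthant" and ss': "l1dist A s s' < e / 2 / (K + 1)"
    using s unfolding toric_var_def closure_in_face_def by blast
  then obtain u where s': "s' = normalize_on A (\<lambda>a. w a * exp (a \<bullet> u))"
    unfolding toric_point_image_eq by blast
  let ?y' = "torus_act A (one_param lam t) s'"
  obtain z where z: "z \<in> subdiv_var A (reg_subdiv A lam) w"
    and y'z: "l1dist A ?y' z \<le> 2 * (sum w A / Min (w ` A)) * exp (- (t * \<delta>))"
    using toric_orbit_point_near_subdiv_var[OF assms(1-4) near] unfolding s' by blast
  have "s \<in> simplex_face A A"
    using s toric_var_subset_simplex_face by blast
  moreover have "s' \<in> simplex_face A A"
    unfolding s' using assms by (intro normalize_on_in_simplex_face) auto
  ultimately have "l1dist A y ?y' \<le> K * l1dist A s s'"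
    unfolding y by (rule lipschitz)
  also have "\<dots> \<le> K * (e / 2 / (K + 1))"
    using ss' \<open>0 \<le> K\<close> by (intro mult_left_mono) auto
  also have "\<dots> \<le> e / 2"
    using \<open>0 \<le> K\<close> \<open>0 < e / 2 / (K + 1)\<close> by (simp add: field_simps)
  finally have "l1dist A y z \<le> e"
    using y'z small l1dist_triangle[of A y z ?y'] by linarith
  then show ?thesis
    using z by blast
qed

lemma eventually_orbit_near_subdiv_var:
  fixes A :: "(real^'d) set"
  assumes "finite A" "A \<noteq> {}" "\<forall>a\<in>A. 0 < w a" "e > 0"
  shows "eventually (\<lambda>t. \<forall>y\<in>torus_act A (one_param lam t) ` toric_var A A w.
            \<exists>z\<in>subdiv_var A (reg_subdiv A lam) w. l1dist A y z \<le> e) at_top"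
proof -
  obtain \<delta> where "\<delta> > 0"
    and near: "\<And>v. \<exists>c. {a\<in>A. \<forall>b\<in>A. lam b + v \<bullet> b < lam a + v \<bullet> a + \<delta>} \<subseteq> max_face A lam c"
    using uniform_near_maximisers_in_max_face[OF assms(1)] by blast
  define C where "C = 2 * (sum w A / Min (w ` A))"
  have "((\<lambda>t. C * exp (- (t * \<delta>))) \<longlongrightarrow> 0) at_top"
    using tendsto_mult_right_zero[OF tendsto_exp_mult_neg_at_top[of "- \<delta>"], of C] \<open>\<delta> > 0\<close> by simp
  then have "eventually (\<lambda>t. C * exp (- (t * \<delta>)) < e / 2) at_top"
    using assms(4) by (intro order_tendstoD(2)) auto
  then show ?thesis
    using eventually_gt_at_top[of 0]
    by eventually_elim (use torus_orbit_near_subdiv_var[OF assms(1-3) _ assms(4) near] in \<open>auto simp: C_def\<close>)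
qed

lemma eventually_orbit_near_max_face_point:
  fixes A :: "(real^'d) set"
  assumes "finite A" "A \<noteq> {}" "\<forall>a\<in>A. 0 < w a" "e > 0"
  shows "eventually (\<lambda>t. \<exists>y\<in>torus_act A (one_param lam t) ` toric_var A A w.
            l1dist A y (normalize_on (max_face A lam c) (\<lambda>a. w a * exp (a \<bullet> u))) < e) at_top"
proof -
  define F where "F = max_face A lam c"
  have F: "F \<subseteq> A" "F \<noteq> {}"
    unfolding F_def using max_face_subset max_face_nonempty[OF assms(1,2)] by auto
  then obtain b where b: "b \<in> F"
    by blast
  obtain \<delta> where "\<delta> > 0" and gap: "\<forall>a\<in>A - F. lam a + c \<bullet> a + \<delta> \<le> lam b + c \<bullet> b"
    using max_face_gap[OF assms(1) b[unfolded F_def]] unfolding F_def by blast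
  \<comment> \<open>the orbit of the point with parameter \<open>u + t c\<close> concentrates on \<open>F\<close>, at rate \<open>exp (- t \<delta>)\<close>\<close>
  define q where "q a = w a * exp (a \<bullet> u)" for a
  have q_pos: "\<forall>a\<in>A. 0 < q a"
    unfolding q_def using assms(3) by simp
  define C where "C = 2 * (sum q A / Min (q ` A))"
  have "((\<lambda>t. C * exp (- (t * \<delta>))) \<longlongrightarrow> 0) at_top"
    using tendsto_mult_right_zero[OF tendsto_exp_mult_neg_at_top[of "- \<delta>"], of C] \<open>\<delta> > 0\<close> by simp
  then have "eventually (\<lambda>t. C * exp (- (t * \<delta>)) < e) at_top"
    using assms(4) by (rule order_tendstoD(2))
  then show ?thesis
    using eventually_ge_at_top[of 0]
  proof eventually_elim
    case (elim t)
    define s where "s = normalize_on A (\<lambda>a. w a * exp (a \<bullet> (u + t *\<^sub>R c)))"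
    have exponent: "w a * exp (t * lam a + a \<bullet> (u + t *\<^sub>R c)) = q a * exp (t * (lam a + c \<bullet> a))" for a
      unfolding q_def by (simp add: inner_add_right inner_commute algebra_simps flip: exp_add)
    have "s \<in> toric_var A A w"
      unfolding s_def using assms(1-3) by (intro normalize_on_in_toric_var) auto
    moreover have "torus_act A (one_param lam t) s = normalize_on A (\<lambda>a. q a * exp (t * (lam a + c \<bullet> a)))"
      unfolding s_def torus_act_one_param_normalize_on[OF assms(1-3)] exponent ..
    moreover have "normalize_on F (\<lambda>a. w a * exp (a \<bullet> u)) = normalize_on F (\<lambda>a. q a * exp (t * (lam a + c \<bullet> a)))"
      using normalize_on_max_face_shift[of A lam c w t "u + t *\<^sub>R c"] unfolding F_def exponent by simp
    moreover have "l1dist A (normalize_on A (\<lambda>a. q a * exp (t * (lam a + c \<bullet> a))))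
        (normalize_on F (\<lambda>a. q a * exp (t * (lam a + c \<bullet> a)))) \<le> C * exp (- (t * \<delta>))"
      unfolding C_def using F b elim by (intro l1dist_normalize_on_exp_le[OF assms(1) F q_pos _ _ gap]) auto
    ultimately show ?case
      using elim unfolding F_def by force
  qed
qed

lemma toric_var_finite_net:
  assumes "finite A" "F \<subseteq> A" "F \<noteq> {}" "\<forall>a\<in>F. 0 < w a" "e > 0"
  obtains K where "finite K" "K \<subseteq> range (\<lambda>u. normalize_on F (\<lambda>a. w a * exp (a \<bullet> u)))"
    and "\<And>z. z \<in> toric_var A F w \<Longrightarrow> \<exists>k\<in>K. l1dist A z k < e"
proof -
  define S where "S = range (\<lambda>u. normalize_on F (\<lambda>a. w a * exp (a \<bullet> u)))"
  have "normalize_on F (\<lambda>a. w a * exp (a \<bullet> u)) \<in> simplex_face A F" for u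
    using assms(1-4) by (intro normalize_on_in_simplex_face) auto
  then have "S \<subseteq> simplex_face A F"
    unfolding S_def by blast
  moreover have "e / 2 > 0"
    using assms(5) by simp
  ultimately obtain K where K: "finite K" "K \<subseteq> S" "\<forall>s\<in>S. \<exists>k\<in>K. l1dist A s k < e / 2"
    by (metis totally_bounded_simplex_face[OF assms(1)])
  have "\<exists>k\<in>K. l1dist A z k < e" if "z \<in> toric_var A F w" for z
  proof -
    have "\<forall>e>0. \<exists>s\<in>S. l1dist A z s < e"
      using that unfolding toric_var_def closure_in_face_def toric_point_image_eq S_def by blast
    then obtain s where "s \<in> S" "l1dist A z s < e / 2"
      using \<open>e / 2 > 0\<close> by blast
    moreover obtain k where "k \<in> K" "l1dist A s k < e / 2"
      using K(3) \<open>s \<in> S\<close> by blast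
    ultimately have "l1dist A z k < e"
      using l1dist_triangle[of A z k s] by linarith
    then show ?thesis
      using \<open>k \<in> K\<close> by blast
  qed
  then show ?thesis
    using that K(1,2) unfolding S_def by blast
qed

lemma subdiv_var_finite_net:
  fixes A :: "(real^'d) set"
  assumes "finite A" "A \<noteq> {}" "\<forall>a\<in>A. 0 < w a" "e > 0"
  obtains K where "finite K"
    and "\<And>k. k \<in> K \<Longrightarrow> \<exists>c u. k = normalize_on (max_face A lam c) (\<lambda>a. w a * exp (a \<bullet> u))"
    and "\<And>z. z \<in> subdiv_var A (reg_subdiv A lam) w \<Longrightarrow> \<exists>k\<in>K. l1dist A z k < e"
proof -
  define faces where "faces = range (max_face A lam)"
  have "faces \<subseteq> Pow A"
    unfolding faces_def using max_face_subset by blast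
  then have "finite faces"
    using assms(1) finite_subset by blast
  have "\<exists>K. finite K \<and> K \<subseteq> range (\<lambda>u. normalize_on F (\<lambda>a. w a * exp (a \<bullet> u)))
      \<and> (\<forall>z\<in>toric_var A F w. \<exists>k\<in>K. l1dist A z k < e)" if F_face: "F \<in> faces" for F
  proof -
    obtain c where F: "F = max_face A lam c"
      using F_face unfolding faces_def by blast
    then have "F \<subseteq> A" "F \<noteq> {}"
      using max_face_subset max_face_nonempty[OF assms(1,2)] by simp_all
    moreover from \<open>F \<subseteq> A\<close> have "\<forall>a\<in>F. 0 < w a"
      using assms(3) by blast
    ultimately show ?thesis
      by (rule toric_var_finite_net[OF assms(1) _ _ _ assms(4)]) blast
  qed
  then have "\<forall>F\<in>faces. \<exists>K. finite K \<and> K \<subseteq> range (\<lambda>u. normalize_on F (\<lambda>a. w a * exp (a \<bullet> u)))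
      \<and> (\<forall>z\<in>toric_var A F w. \<exists>k\<in>K. l1dist A z k < e)"
    by blast
  then obtain net where net: "\<forall>F\<in>faces. finite (net F)
      \<and> net F \<subseteq> range (\<lambda>u. normalize_on F (\<lambda>a. w a * exp (a \<bullet> u)))
      \<and> (\<forall>z\<in>toric_var A F w. \<exists>k\<in>net F. l1dist A z k < e)"
    by (rule bchoice[THEN exE])
  then have net_face: "finite (net F)" "net F \<subseteq> range (\<lambda>u. normalize_on F (\<lambda>a. w a * exp (a \<bullet> u)))"
    "\<forall>z\<in>toric_var A F w. \<exists>k\<in>net F. l1dist A z k < e" if "F \<in> faces" for F
    using bspec[OF net that] by simp_all
  show ?thesis
  proof (rule that[of "\<Union>F\<in>faces. net F"])
    show "finite (\<Union>F\<in>faces. net F)"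
      using \<open>finite faces\<close> net_face(1) by (rule finite_UN_I)
  next
    fix k assume "k \<in> (\<Union>F\<in>faces. net F)"
    then obtain c where "k \<in> net (max_face A lam c)"
      unfolding faces_def by blast
    then obtain u where "k = normalize_on (max_face A lam c) (\<lambda>a. w a * exp (a \<bullet> u))"
      using net_face(2)[of "max_face A lam c"] unfolding faces_def by blast
    then show "\<exists>c u. k = normalize_on (max_face A lam c) (\<lambda>a. w a * exp (a \<bullet> u))"
      by blast
  next
    fix z assume "z \<in> subdiv_var A (reg_subdiv A lam) w"
    then obtain c where "z \<in> toric_var A (max_face A lam c) w"
      unfolding subdiv_var_reg_subdiv[OF assms(1,2)] by blast
    then obtain k where "k \<in> net (max_face A lam c)" "l1dist A z k < e"
      using net_face(3)[of "max_face A lam c"] unfolding faces_def by blast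
    then show "\<exists>k\<in>\<Union>F\<in>faces. net F. l1dist A z k < e"
      unfolding faces_def by blast
  qed
qed

lemma eventually_subdiv_var_near_orbit:
  fixes A :: "(real^'d) set"
  assumes "finite A" "A \<noteq> {}" "\<forall>a\<in>A. 0 < w a" "e > 0"
  shows "eventually (\<lambda>t. \<forall>z\<in>subdiv_var A (reg_subdiv A lam) w.
            \<exists>y\<in>torus_act A (one_param lam t) ` toric_var A A w. l1dist A y z \<le> e) at_top"
proof -
  define X where "X t = torus_act A (one_param lam t) ` toric_var A A w" for t
  have e2: "e / 2 > 0"
    using assms(4) by simp
  obtain K where "finite K"
    and K: "\<And>k. k \<in> K \<Longrightarrow> \<exists>c u. k = normalize_on (max_face A lam c) (\<lambda>a. w a * exp (a \<bullet> u))"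
    and net: "\<And>z. z \<in> subdiv_var A (reg_subdiv A lam) w \<Longrightarrow> \<exists>k\<in>K. l1dist A z k < e / 2"
    using subdiv_var_finite_net[OF assms(1-3) e2] by blast
  have "eventually (\<lambda>t. \<exists>y\<in>X t. l1dist A y k < e / 2) at_top" if "k \<in> K" for k
    using K[OF that] eventually_orbit_near_max_face_point[OF assms(1-3) e2] unfolding X_def by blast
  then have "eventually (\<lambda>t. \<forall>k\<in>K. \<exists>y\<in>X t. l1dist A y k < e / 2) at_top"
    by (intro eventually_ball_finite[OF \<open>finite K\<close>] ballI)
  then show ?thesis
    unfolding X_def[symmetric]
  proof eventually_elim
    case (elim t)
    show ?case
    proof
      fix z assume "z \<in> subdiv_var A (reg_subdiv A lam) w"
      then obtain k where "k \<in> K" and "l1dist A z k < e / 2"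
        using net by blast
      moreover obtain y where "y \<in> X t" and "l1dist A y k < e / 2"
        using elim \<open>k \<in> K\<close> by blast
      ultimately have "l1dist A y z \<le> e"
        using l1dist_triangle[of A y z k] l1dist_commute[of A k z] by linarith
      then show "\<exists>y\<in>X t. l1dist A y z \<le> e"
        using \<open>y \<in> X t\<close> by blast
    qed
  qed
qed

lemma abs_hausdorff_l1_le:
  assumes "X \<noteq> {}" "Y \<noteq> {}"
    and "\<forall>x\<in>X. \<exists>y\<in>Y. l1dist A x y \<le> e" "\<forall>y\<in>Y. \<exists>x\<in>X. l1dist A x y \<le> e"
  shows "\<bar>hausdorff_l1 A X Y\<bar> \<le> e"
proof -
  have bdd: "bdd_below ((\<lambda>y. l1dist A x y) ` Y)" "bdd_below ((\<lambda>x. l1dist A x y) ` X)" for x y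
    by (rule bdd_belowI2[of _ 0], rule l1dist_nonneg)+
  have inf_X: "(INF y\<in>Y. l1dist A x y) \<le> e" if "x \<in> X" for x
    using assms(3) that cINF_lower[OF bdd(1)] by (meson order_trans)
  have inf_Y: "(INF x\<in>X. l1dist A x y) \<le> e" if "y \<in> Y" for y
    using assms(4) that cINF_lower[OF bdd(2)] by (meson order_trans)
  have "(SUP x\<in>X. INF y\<in>Y. l1dist A x y) \<le> e" "(SUP y\<in>Y. INF x\<in>X. l1dist A x y) \<le> e"
    using inf_X inf_Y by (simp_all add: cSUP_least assms(1,2))
  moreover obtain x where "x \<in> X"
    using assms(1) by blast
  then have "0 \<le> (SUP x\<in>X. INF y\<in>Y. l1dist A x y)"
    using cINF_greatest[OF assms(2), of 0 "l1dist A x"] l1dist_nonneg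
      cSUP_upper[of x X "\<lambda>x. INF y\<in>Y. l1dist A x y"] inf_X
    by (meson bdd_aboveI2 order_trans)
  ultimately show ?thesis
    unfolding hausdorff_l1_def by auto
qed

theorem mainTheorem7:
  fixes A :: "(real^'d) set" and lam :: "real^'d \<Rightarrow> real" and w :: "real^'d \<Rightarrow> real"
  assumes "finite A" and "A \<noteq> {}" and "\<forall>a\<in>A. 0 < w a"
  shows "((\<lambda>t. hausdorff_l1 A (torus_act A (one_param lam t) ` toric_var A A w)
                              (subdiv_var A (reg_subdiv A lam) w)) \<longlongrightarrow> 0) at_top"
proof (rule tendstoI)
  fix \<epsilon> :: real assume "\<epsilon> > 0"
  let ?X = "\<lambda>t. torus_act A (one_param lam t) ` toric_var A A w"
  let ?Z = "subdiv_var A (reg_subdiv A lam) w"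
  have "normalize_on A (\<lambda>a. w a * exp (a \<bullet> 0)) \<in> toric_var A A w"
    using assms by (intro normalize_on_in_toric_var) auto
  then have X_ne: "?X t \<noteq> {}" for t
    by blast
  have "normalize_on (max_face A lam 0) (\<lambda>a. w a * exp (a \<bullet> 0)) \<in> toric_var A (max_face A lam 0) w"
    using assms max_face_subset[of A lam 0]
    by (intro normalize_on_in_toric_var max_face_nonempty) auto
  then have Z_ne: "?Z \<noteq> {}"
    unfolding subdiv_var_reg_subdiv[OF assms(1,2)] by blast
  have "\<epsilon> / 2 > 0"
    using \<open>\<epsilon> > 0\<close> by simp
  show "eventually (\<lambda>t. dist (hausdorff_l1 A (?X t) ?Z) 0 < \<epsilon>) at_top"
    using eventually_orbit_near_subdiv_var[OF assms \<open>\<epsilon> / 2 > 0\<close>, where lam = lam]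
      eventually_subdiv_var_near_orbit[OF assms \<open>\<epsilon> / 2 > 0\<close>, where lam = lam]
  proof eventually_elim
    case (elim t)
    then have "\<bar>hausdorff_l1 A (?X t) ?Z\<bar> \<le> \<epsilon> / 2"
      by (intro abs_hausdorff_l1_le[OF X_ne Z_ne]) auto
    then show ?case
      using \<open>\<epsilon> > 0\<close> by simp
  qed
qed

end
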